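(* Let $\psi$ be an additive character of $\mathbb{F}_{q^2}$ of conductor $q^2$. If $\nu$ is any character of $H'$ whose restriction to $H_0'$ equals $\widetilde\psi$, then the representation $\mathrm{Ind}_{H'}^{\mathcal U}(\nu)$ is irreducible.
   Context: Let $p$ be a prime, $q$ a power of $p$, $\ell\ne p$, and $h\ge2$ an integer; representations are over $\overline{\mathbb{Q}}_\ell$. For a commutative $\mathbb{F}_q$-algebra $A$, $U_h^{2,q}(A)$ is the set of formal expressions $1+\sum_{i=1}^{2(h-1)}a_i\tau^i$ ($a_i\in A$) with multiplication obtained by extending $(a\tau^i)(b\tau^j)=ab^{q^i}\tau^{i+j}$ bi-additively, $\tau^0=1$, $\tau^k=0$ for $k>2(h-1)$. In $\mathcal U=U_h^{2,q}(\mathbb{F}_{q^2})$ define $H_0'=\{1+\sum a_i\tau^i: a_i=0\text{ unless } i=2(h-1)\text{ or } i\text{ is odd with } i>h-1\}$; if $h$ is odd, $H'=\{1+\sum a_i\tau^i: a_i=0\text{ for all odd } i\le h-1\}$; if $h$ is even, $H'=\{1+\sum a_i\tau^i: a_i=0\text{ for odd } i<h-1,\ a_{h-1}\in\mathbb{F}_q\}$. An additive character $\psi\colon\mathbb{F}_{q^2}\to\overline{\mathbb{Q}}_\ell^\times$ has conductor $q^2$ if there exists $x$ with $\psi(x^q)\ne\psi(x)$; $\widetilde\psi$ is the character $1+\sum a_i\tau^i\mapsto\psi(a_{2(h-1)})$ of $H_0'$. *)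

theory Defs
  imports "HOL-Computational_Algebra.Polynomial"
begin

text \<open>Elements of U_h^{2,q}(A) with A = the finite field 'a are encoded as coefficient
  sequences a :: nat => 'a with a 0 = 1 and a i = 0 for i > 2(h-1); the sequence a stands
  for 1 + sum a_i tau^i.\<close>

definition U_carrier :: "nat \<Rightarrow> (nat \<Rightarrow> 'a::field) set" where
  "U_carrier h = {a. a 0 = 1 \<and> (\<forall>i. i > 2*(h-1) \<longrightarrow> a i = 0)}"

text \<open>Multiplication: (sum a_i tau^i)(sum b_j tau^j) = sum_k (sum_{i<=k} a_i b_{k-i}^{q^i}) tau^k,
  truncated at degree 2(h-1).\<close>
definition U_mult :: "nat \<Rightarrow> nat \<Rightarrow> (nat \<Rightarrow> 'a::field) \<Rightarrow> (nat \<Rightarrow> 'a) \<Rightarrow> (nat \<Rightarrow> 'a)" where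
  "U_mult q h a b = (\<lambda>k. if k \<le> 2*(h-1) then (\<Sum>i\<le>k. a i * (b (k-i)) ^ (q^i)) else 0)"

definition H0' :: "nat \<Rightarrow> (nat \<Rightarrow> 'a::field) set" where
  "H0' h = {a \<in> U_carrier h. \<forall>i. a i \<noteq> 0 \<and> i \<ge> 1 \<longrightarrow>
              i = 2*(h-1) \<or> (odd i \<and> i > h-1)}"

definition H' :: "nat \<Rightarrow> nat \<Rightarrow> (nat \<Rightarrow> 'a::field) set" where
  "H' q h = (if odd h
     then {a \<in> U_carrier h. \<forall>i. odd i \<and> i \<le> h-1 \<longrightarrow> a i = 0}
     else {a \<in> U_carrier h. (\<forall>i. odd i \<and> i < h-1 \<longrightarrow> a i = 0) \<and> (a (h-1)) ^ q = a (h-1)})"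

definition additive_character :: "('a::field \<Rightarrow> 'k::field) \<Rightarrow> bool" where
  "additive_character \<psi> \<longleftrightarrow> (\<forall>x y. \<psi> (x + y) = \<psi> x * \<psi> y) \<and> (\<forall>x. \<psi> x \<noteq> 0)"

definition has_conductor_q2 :: "nat \<Rightarrow> ('a::field \<Rightarrow> 'k::field) \<Rightarrow> bool" where
  "has_conductor_q2 q \<psi> \<longleftrightarrow> (\<exists>x. \<psi> (x ^ q) \<noteq> \<psi> x)"

definition is_character_on :: "('g \<Rightarrow> 'g \<Rightarrow> 'g) \<Rightarrow> 'g set \<Rightarrow> ('g \<Rightarrow> 'k::field) \<Rightarrow> bool" where
  "is_character_on mul H \<nu> \<longleftrightarrow>
     (\<forall>x\<in>H. \<nu> x \<noteq> 0) \<and> (\<forall>x\<in>H. \<forall>y\<in>H. \<nu> (mul x y) = \<nu> x * \<nu> y)"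

definition ind_space :: "('g \<Rightarrow> 'g \<Rightarrow> 'g) \<Rightarrow> 'g set \<Rightarrow> 'g set \<Rightarrow> ('g \<Rightarrow> 'k::field) \<Rightarrow> ('g \<Rightarrow> 'k) set" where
  "ind_space mul G H \<nu> = {f. (\<forall>g. g \<notin> G \<longrightarrow> f g = 0) \<and>
      (\<forall>h\<in>H. \<forall>g\<in>G. f (mul h g) = \<nu> h * f g)}"

definition right_transl :: "('g \<Rightarrow> 'g \<Rightarrow> 'g) \<Rightarrow> 'g set \<Rightarrow> 'g \<Rightarrow> ('g \<Rightarrow> 'k::field) \<Rightarrow> ('g \<Rightarrow> 'k)" where
  "right_transl mul G x f = (\<lambda>g. if g \<in> G then f (mul g x) else 0)"

definition invariant_subspace ::
  "('g \<Rightarrow> 'g \<Rightarrow> 'g) \<Rightarrow> 'g set \<Rightarrow> ('g \<Rightarrow> 'k::field) set \<Rightarrow> bool" where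
  "invariant_subspace mul G W \<longleftrightarrow>
     (\<lambda>_. 0) \<in> W \<and> (\<forall>f\<in>W. \<forall>f'\<in>W. (\<lambda>g. f g + f' g) \<in> W) \<and>
     (\<forall>c. \<forall>f\<in>W. (\<lambda>g. c * f g) \<in> W) \<and>
     (\<forall>x\<in>G. \<forall>f\<in>W. right_transl mul G x f \<in> W)"

definition induced_irreducible :: "('g \<Rightarrow> 'g \<Rightarrow> 'g) \<Rightarrow> 'g set \<Rightarrow> 'g set \<Rightarrow> ('g \<Rightarrow> 'k::field) \<Rightarrow> bool" where
  "induced_irreducible mul G H \<nu> \<longleftrightarrow>
     ind_space mul G H \<nu> \<noteq> {\<lambda>_. 0} \<and>
     (\<forall>W. W \<subseteq> ind_space mul G H \<nu> \<and> invariant_subspace mul G W \<longrightarrow>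
          W = {\<lambda>_. 0} \<or> W = ind_space mul G H \<nu>)"

definition algebraically_closed :: "'k::field itself \<Rightarrow> bool" where
  "algebraically_closed _ \<longleftrightarrow> (\<forall>p :: 'k poly. degree p > 0 \<longrightarrow> (\<exists>x. poly p x = 0))"

end

theory Submission
  imports Defs "HOL-Number_Theory.Residues"
begin

text \<open>By Mackey's criterion, \<open>Ind\<^sub>H\<^sup>G \<nu>\<close> is irreducible as soon as for every
  \<open>g \<notin> H\<close> there are \<open>x, y \<in> H\<close> with \<open>g x = y g\<close> and \<open>\<nu> x \<noteq> \<nu> y\<close>: averaging over \<open>H\<close>
  pushes any nonzero invariant subspace onto the line of functions that are \<open>\<nu>\<close>-equivariant
  on both sides, which is spanned by \<open>\<nu>\<close> extended by zero, and that function generates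
  the whole induced space.

  For \<open>g \<in> U \<setminus> H'\<close> let \<open>j\<close> be the least odd index \<open>\<le> h - 1\<close> with \<open>g\<^sub>j \<noteq> 0\<close> (if
  \<open>j = h - 1\<close> then \<open>g\<^sub>j \<notin> \<bbbF>\<^sub>q\<close>) and put \<open>x = 1 + a\<tau>\<^sup>2\<^sup>(\<^sup>h\<^sup>-\<^sup>1\<^sup>)\<^sup>-\<^sup>j \<in> H'\<close>.
  A parity count shows that the commutator \<open>g x g\<^sup>-\<^sup>1 x\<^sup>-\<^sup>1\<close> lies in \<open>H\<^sub>0'\<close> with top
  coefficient \<open>g\<^sub>j a\<^sup>q - a g\<^sub>j\<^sup>q\<close>, so \<open>y = g x g\<^sup>-\<^sup>1 \<in> H'\<close> and
  \<open>\<nu> y = \<psi>(g\<^sub>j a\<^sup>q - a g\<^sub>j\<^sup>q) \<nu> x\<close>. As \<open>\<psi>\<close> has conductor \<open>q\<^sup>2\<close>, some \<open>\<psi>(c\<^sup>q - c) \<noteq> 1\<close>,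
  and \<open>a\<close> can be chosen with \<open>g\<^sub>j a\<^sup>q - a g\<^sub>j\<^sup>q = c\<^sup>q - c\<close>.\<close>

section \<open>Mackey's irreducibility criterion\<close>

lemma (in group) finite_mult_closed_subgroup:
  assumes fin: "finite S" and sub: "S \<subseteq> carrier G" and ne: "S \<noteq> {}"
    and closed: "\<And>a b. a \<in> S \<Longrightarrow> b \<in> S \<Longrightarrow> a \<otimes> b \<in> S"
  shows "subgroup S G"
proof (rule subgroupI[OF sub ne])
  fix a b assume "a \<in> S" "b \<in> S" then show "a \<otimes> b \<in> S" by (rule closed)
next
  fix x assume x: "x \<in> S"
  then have xG: "x \<in> carrier G" using sub by auto
  have "inj_on (\<lambda>y. x \<otimes> y) S"
    using sub xG by (intro inj_onI) (metis Units_eq Units_l_cancel subsetD)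
  then have onto: "(\<lambda>y. x \<otimes> y) ` S = S"
    by (intro card_subset_eq[OF fin]) (use closed x card_image in auto)
  then obtain y where y: "y \<in> S" "x \<otimes> y = x"
    using x by (metis imageE)
  then have "\<one> \<in> S" using sub xG by (metis l_cancel_one subsetD)
  then obtain z where z: "z \<in> S" "x \<otimes> z = \<one>"
    using onto by (metis imageE)
  moreover have "z \<in> carrier G" using z sub by auto
  ultimately have "inv x = z" using xG by (metis inv_comm inv_equality)
  then show "inv x \<in> S" using z by simp
qed

lemma finite_field_power_card:
  fixes x :: "'a::{field,finite}"
  shows "x ^ card (UNIV :: 'a set) = x"
proof (cases "x = 0")
  case True
  then show ?thesis using finite_UNIV_card_ge_0[where ?'a = 'a] by simp
next
  case False
  define M :: "'a monoid" where "M = \<lparr>carrier = UNIV - {0}, mult = (*), one = 1\<rparr>"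
  have "group M"
  proof (rule groupI)
    fix y assume "y \<in> carrier M"
    then show "\<exists>z\<in>carrier M. z \<otimes>\<^bsub>M\<^esub> y = \<one>\<^bsub>M\<^esub>"
      by (intro bexI[of _ "inverse y"]) (auto simp: M_def)
  qed (auto simp: M_def mult.assoc)
  moreover have "x [^]\<^bsub>M\<^esub> n = x ^ n" for n
    by (induction n) (simp_all add: M_def)
  moreover have "order M = card (UNIV :: 'a set) - 1"
    by (simp add: order_def M_def card_Diff_singleton)
  ultimately have "x ^ (card (UNIV :: 'a set) - 1) = 1"
    using group.pow_order_eq_1[of M x] False by (simp add: M_def)
  then have "x ^ Suc (card (UNIV :: 'a set) - 1) = x" by simp
  moreover have "Suc (card (UNIV :: 'a set) - 1) = card (UNIV :: 'a set)"
    using finite_UNIV_card_ge_0[where ?'a = 'a] by simp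
  ultimately show ?thesis by simp
qed

lemma invariant_subspace_sum:
  assumes W: "invariant_subspace mul G W" and "finite A" and "\<And>a. a \<in> A \<Longrightarrow> \<phi> a \<in> W"
  shows "(\<lambda>g. \<Sum>a\<in>A. \<phi> a g) \<in> W"
  using assms(2,3)
proof (induction A rule: finite_induct)
  case empty
  then show ?case using W by (simp add: invariant_subspace_def)
next
  case (insert a A)
  have "\<And>f f'. f \<in> W \<Longrightarrow> f' \<in> W \<Longrightarrow> (\<lambda>g. f g + f' g) \<in> W"
    using W by (simp add: invariant_subspace_def)
  then have "(\<lambda>g. \<phi> a g + (\<Sum>a\<in>A. \<phi> a g)) \<in> W"
    using insert by simp
  then show ?case using insert by simp
qed

locale induced_from_character =
  group G + subgroup H G for G :: "('g, 'b) monoid_scheme" (structure) and H +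
  fixes \<nu> :: "'g \<Rightarrow> 'k::field_char_0"
  assumes finite_carrier: "finite (carrier G)"
    and character: "is_character_on (mult G) H \<nu>"
begin

abbreviation ind :: "('g \<Rightarrow> 'k) set" where
  "ind \<equiv> ind_space (mult G) (carrier G) H \<nu>"

abbreviation rt :: "'g \<Rightarrow> ('g \<Rightarrow> 'k) \<Rightarrow> 'g \<Rightarrow> 'k" where
  "rt \<equiv> right_transl (mult G) (carrier G)"

lemma finite_H: "finite H"
  using finite_carrier subset finite_subset by blast

lemma character_nonzero: "x \<in> H \<Longrightarrow> \<nu> x \<noteq> 0"
  and character_mult: "x \<in> H \<Longrightarrow> y \<in> H \<Longrightarrow> \<nu> (x \<otimes> y) = \<nu> x * \<nu> y"
  using character by (auto simp: is_character_on_def)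

lemma character_one: "\<nu> \<one> = 1"
  using character_mult[of \<one> \<one>] character_nonzero[of \<one>] by simp

lemma character_inv: "x \<in> H \<Longrightarrow> \<nu> (inv x) = inverse (\<nu> x)"
proof -
  assume x: "x \<in> H"
  then have "\<nu> (inv x) * \<nu> x = 1"
    using character_one character_mult[of "inv x" x] by (simp add: subsetD[OF subset])
  then show ?thesis by (simp add: inverse_unique[symmetric] mult.commute)
qed

lemma ind_left: "f \<in> ind \<Longrightarrow> k \<in> H \<Longrightarrow> g \<in> carrier G \<Longrightarrow> f (k \<otimes> g) = \<nu> k * f g"
  and ind_outside: "f \<in> ind \<Longrightarrow> g \<notin> carrier G \<Longrightarrow> f g = 0"
  by (auto simp: ind_space_def)

definition ind_delta :: "'g \<Rightarrow> 'k" where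
  "ind_delta g = (if g \<in> H then \<nu> g else 0)"

lemma ind_delta_in_ind: "ind_delta \<in> ind"
  unfolding ind_space_def
proof (intro CollectI conjI allI impI ballI)
  fix g assume "g \<notin> carrier G"
  then show "ind_delta g = 0" using subset by (auto simp: ind_delta_def)
next
  fix k g assume k: "k \<in> H" and g: "g \<in> carrier G"
  have "k \<otimes> g \<in> H \<longleftrightarrow> g \<in> H"
  proof
    assume "k \<otimes> g \<in> H"
    then have "inv k \<otimes> (k \<otimes> g) \<in> H" using k by simp
    then show "g \<in> H" using k g subset by (simp add: m_assoc[symmetric] subsetD)
  qed (use k in simp)
  then show "ind_delta (k \<otimes> g) = \<nu> k * ind_delta g"
    using k by (simp add: ind_delta_def character_mult)
qed

lemma ind_nontrivial: "ind \<noteq> {\<lambda>_. 0}"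
proof
  assume "ind = {\<lambda>_. 0}"
  then have "ind_delta \<one> = 0" using ind_delta_in_ind by auto
  then show False using character_one by (simp add: ind_delta_def)
qed

definition right_average :: "('g \<Rightarrow> 'k) \<Rightarrow> 'g \<Rightarrow> 'k" where
  "right_average f g = (\<Sum>k\<in>H. inverse (\<nu> k) * rt k f g)"

lemma right_average_mem:
  assumes W: "invariant_subspace (mult G) (carrier G) W" and f: "f \<in> W"
  shows "right_average f \<in> W"
  unfolding right_average_def[abs_def]
proof (rule invariant_subspace_sum[OF W finite_H])
  fix k assume "k \<in> H"
  then show "(\<lambda>g. inverse (\<nu> k) * rt k f g) \<in> W"
    using W f subset unfolding invariant_subspace_def by blast
qed

lemma right_average_right_equivariant:
  assumes g: "g \<in> carrier G" and x: "x \<in> H"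
  shows "right_average f (g \<otimes> x) = \<nu> x * right_average f g"
proof -
  have xG: "x \<in> carrier G" using x subset by auto
  have "right_average f (g \<otimes> x) = (\<Sum>k\<in>H. inverse (\<nu> k) * f (g \<otimes> x \<otimes> k))"
    unfolding right_average_def right_transl_def using g xG by simp
  also have "\<dots> = (\<Sum>k\<in>H. inverse (\<nu> (inv x \<otimes> k)) * f (g \<otimes> x \<otimes> (inv x \<otimes> k)))"
    by (rule sum.reindex_bij_witness[of _ "\<lambda>k. inv x \<otimes> k" "\<lambda>k. x \<otimes> k"])
       (use x xG subset in \<open>auto simp: m_assoc[symmetric]\<close>)
  also have "\<dots> = (\<Sum>k\<in>H. \<nu> x * (inverse (\<nu> k) * f (g \<otimes> k)))"
  proof (rule sum.cong[OF refl])
    fix k assume k: "k \<in> H"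
    then have "g \<otimes> x \<otimes> (inv x \<otimes> k) = g \<otimes> k"
      using g xG subset by (simp add: m_assoc[symmetric] subsetD) (simp add: m_assoc subsetD)
    moreover have "\<nu> (inv x \<otimes> k) = inverse (\<nu> x) * \<nu> k"
      using x k by (simp add: character_mult character_inv)
    ultimately show "inverse (\<nu> (inv x \<otimes> k)) * f (g \<otimes> x \<otimes> (inv x \<otimes> k))
        = \<nu> x * (inverse (\<nu> k) * f (g \<otimes> k))"
      using x by (simp add: mult_ac)
  qed
  also have "\<dots> = \<nu> x * right_average f g"
    unfolding right_average_def right_transl_def using g by (simp add: sum_distrib_left)
  finally show ?thesis .
qed

lemma right_average_one:
  assumes f: "f \<in> ind"
  shows "right_average f \<one> = of_nat (card H) * f \<one>"
proof -
  have "right_average f \<one> = (\<Sum>k\<in>H. inverse (\<nu> k) * f k)"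
    unfolding right_average_def right_transl_def using subset by (intro sum.cong) auto
  also have "\<dots> = (\<Sum>k\<in>H. f \<one>)"
  proof (rule sum.cong[OF refl])
    fix k assume k: "k \<in> H"
    then have "f k = \<nu> k * f \<one>" using ind_left[OF f k, of \<one>] by simp
    then show "inverse (\<nu> k) * f k = f \<one>" using character_nonzero[OF k] by simp
  qed
  finally show ?thesis by simp
qed

definition mackey_separated :: bool where
  "mackey_separated \<longleftrightarrow>
    (\<forall>g \<in> carrier G - H. \<exists>x\<in>H. \<exists>y\<in>H. g \<otimes> x = y \<otimes> g \<and> \<nu> x \<noteq> \<nu> y)"

lemma bi_equivariant_eq_delta:
  assumes separated: "mackey_separated"
    and F: "F \<in> ind" and right: "\<And>g x. g \<in> carrier G \<Longrightarrow> x \<in> H \<Longrightarrow> F (g \<otimes> x) = \<nu> x * F g"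
  shows "F = (\<lambda>g. F \<one> * ind_delta g)"
proof
  fix g
  consider "g \<notin> carrier G" | "g \<in> H" | "g \<in> carrier G" "g \<notin> H" by blast
  then show "F g = F \<one> * ind_delta g"
  proof cases
    case 1
    then show ?thesis using ind_outside[OF F] subset by (auto simp: ind_delta_def)
  next
    case 2
    then show ?thesis using ind_left[OF F 2, of \<one>] subset by (auto simp: ind_delta_def)
  next
    case 3
    then obtain x y where xy: "x \<in> H" "y \<in> H" "g \<otimes> x = y \<otimes> g" "\<nu> x \<noteq> \<nu> y"
      using separated 3 unfolding mackey_separated_def by blast
    then have "\<nu> x * F g = \<nu> y * F g"
      using right[OF 3(1) xy(1)] ind_left[OF F xy(2) 3(1)] by simp
    then show ?thesis using xy(4) 3(2) by (simp add: ind_delta_def)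
  qed
qed

lemma ind_delta_mem_invariant:
  assumes separated: "mackey_separated"
    and W: "invariant_subspace (mult G) (carrier G) W" "W \<subseteq> ind" and f: "f \<in> W" "f \<noteq> (\<lambda>_. 0)"
  shows "ind_delta \<in> W"
proof -
  obtain g0 where g0: "f g0 \<noteq> 0" using f(2) by auto
  then have g0G: "g0 \<in> carrier G" using ind_outside f(1) W(2) by blast
  define F where "F = right_average (rt g0 f)"
  have "rt g0 f \<in> W" using W(1) f(1) g0G by (simp add: invariant_subspace_def)
  then have FW: "F \<in> W" and f1: "rt g0 f \<in> ind"
    using right_average_mem[OF W(1)] W(2) F_def by auto
  have F1: "F \<one> \<noteq> 0"
    using right_average_one[OF f1] g0 g0G finite_imp_card_positive[OF finite_carrier]
    by (simp add: F_def right_transl_def)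
  have "F = (\<lambda>g. F \<one> * ind_delta g)"
    using separated FW W(2)
    by (intro bi_equivariant_eq_delta) (auto simp: F_def right_average_right_equivariant)
  then have "ind_delta = (\<lambda>g. inverse (F \<one>) * F g)"
    using F1 by (metis (no_types) divide_inverse_commute nonzero_mult_div_cancel_left)
  then show ?thesis using W(1) FW by (simp add: invariant_subspace_def)
qed

lemma ind_expansion:
  assumes f: "f \<in> ind"
  shows "f = (\<lambda>u. \<Sum>g\<in>carrier G. inverse (of_nat (card H)) * f (inv g) * rt g ind_delta u)"
    (is "f = ?S")
proof
  fix u
  define c where "c = inverse (of_nat (card H) :: 'k)"
  show "f u = ?S u"
  proof (cases "u \<in> carrier G")
    case False
    then show ?thesis using ind_outside[OF f] by (simp add: right_transl_def)
  next
    case u: True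
    have "?S u = (\<Sum>g\<in>carrier G. c * f (inv g) * ind_delta (u \<otimes> g))"
      using u by (simp add: c_def right_transl_def)
    also have "\<dots> = (\<Sum>k\<in>carrier G. c * f (inv (inv u \<otimes> k)) * ind_delta (u \<otimes> (inv u \<otimes> k)))"
      by (rule sum.reindex_bij_witness[of _ "\<lambda>k. inv u \<otimes> k" "\<lambda>g. u \<otimes> g"])
         (use u in \<open>auto simp: m_assoc[symmetric]\<close>)
    also have "\<dots> = (\<Sum>k\<in>carrier G. if k \<in> H then c * f u else 0)"
    proof (rule sum.cong[OF refl])
      fix k assume k: "k \<in> carrier G"
      have "u \<otimes> (inv u \<otimes> k) = k" "inv (inv u \<otimes> k) = inv k \<otimes> u"
        using u k by (simp_all add: m_assoc[symmetric] inv_mult_group)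
      moreover have "k \<in> H \<Longrightarrow> f (inv k \<otimes> u) = inverse (\<nu> k) * f u"
        using ind_left[OF f _ u] by (simp add: character_inv)
      ultimately show "c * f (inv (inv u \<otimes> k)) * ind_delta (u \<otimes> (inv u \<otimes> k))
          = (if k \<in> H then c * f u else 0)"
        using character_nonzero by (simp add: ind_delta_def)
    qed
    also have "\<dots> = of_nat (card H) * (c * f u)"
      using subset finite_carrier by (simp add: sum.If_cases Int_absorb1)
    also have "\<dots> = f u"
      using finite_imp_card_positive[OF finite_carrier] by (simp add: c_def)
    finally show ?thesis by simp
  qed
qed

lemma ind_subset_if_ind_delta_mem:
  assumes W: "invariant_subspace (mult G) (carrier G) W" and delta: "ind_delta \<in> W"
  shows "ind \<subseteq> W"
proof
  fix f assume f: "f \<in> ind"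
  have "(\<lambda>u. \<Sum>g\<in>carrier G. inverse (of_nat (card H)) * f (inv g) * rt g ind_delta u) \<in> W"
  proof (rule invariant_subspace_sum[OF W finite_carrier])
    fix g assume "g \<in> carrier G"
    then have "rt g ind_delta \<in> W" using W delta by (simp add: invariant_subspace_def)
    then show "(\<lambda>u. inverse (of_nat (card H)) * f (inv g) * rt g ind_delta u) \<in> W"
      using W by (simp add: invariant_subspace_def mult.assoc)
  qed
  then show "f \<in> W" using ind_expansion[OF f] by simp
qed

theorem mackey_irreducible:
  assumes separated: "mackey_separated"
  shows "induced_irreducible (mult G) (carrier G) H \<nu>"
  unfolding induced_irreducible_def
proof (intro conjI ind_nontrivial allI impI)
  fix W assume W: "W \<subseteq> ind \<and> invariant_subspace (mult G) (carrier G) W"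
  show "W = {\<lambda>_. 0} \<or> W = ind"
  proof (cases "W = {\<lambda>_. 0}")
    case False
    moreover have "(\<lambda>_. 0) \<in> W" using W by (simp add: invariant_subspace_def)
    ultimately obtain f where "f \<in> W" "f \<noteq> (\<lambda>_. 0)" by blast
    then have "ind_delta \<in> W" using ind_delta_mem_invariant[OF separated] W by blast
    then show ?thesis using W ind_subset_if_ind_delta_mem by blast
  qed simp
qed

end

section \<open>The group \<open>U\<^sub>h\<^sup>2\<^sup>,\<^sup>q\<close>\<close>

lemma sum_triangle_swap:
  fixes F :: "nat \<Rightarrow> nat \<Rightarrow> 'b::comm_monoid_add"
  shows "(\<Sum>i\<le>k. \<Sum>j\<le>i. F i j) = (\<Sum>j\<le>k. \<Sum>l\<le>k-j. F (j+l) j)"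
proof -
  have "(\<Sum>i\<le>k. \<Sum>j\<le>i. F i j) = (\<Sum>i\<le>k. \<Sum>j\<le>i. (\<lambda>j l. F (j+l) j) j (i-j))"
    by (intro sum.cong) auto
  also have "\<dots> = (\<Sum>(j,l)\<in>{(j,l). j+l \<le> k}. F (j+l) j)"
    by (rule sum.triangle_reindex_eq[symmetric])
  also have "{(j,l). j+l \<le> k} = Sigma {..k} (\<lambda>j. {..k-j})" by auto
  also have "(\<Sum>(j,l)\<in>Sigma {..k} (\<lambda>j. {..k-j}). F (j+l) j) = (\<Sum>j\<le>k. \<Sum>l\<le>k-j. F (j+l) j)"
    by (rule sum.Sigma[symmetric]) auto
  finally show ?thesis .
qed

locale unipotent_U =
  fixes q h :: nat and field_type :: "'a::{field,finite} itself"
  assumes power_q_add: "\<And>x y :: 'a. (x + y) ^ q = x ^ q + y ^ q"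
    and power_q_q: "\<And>x :: 'a. (x ^ q) ^ q = x"
    and q_pos: "q > 0" and h_ge_2: "h \<ge> 2"
begin

declare q_pos [simp]

abbreviation mul :: "(nat \<Rightarrow> 'a) \<Rightarrow> (nat \<Rightarrow> 'a) \<Rightarrow> nat \<Rightarrow> 'a" where
  "mul \<equiv> U_mult q h"

abbreviation U_one :: "nat \<Rightarrow> 'a" where
  "U_one \<equiv> (\<lambda>i. if i = 0 then 1 else 0)"

abbreviation N :: nat where
  "N \<equiv> 2 * (h - 1)"

lemma power_qpow_add: "((x::'a) + y) ^ (q ^ k) = x ^ (q ^ k) + y ^ (q ^ k)"
proof (induction k arbitrary: x y)
  case (Suc k)
  then show ?case by (simp add: power_mult power_q_add)
qed simp

lemma power_qpow_sum: "(\<Sum>i\<in>A. f i :: 'a) ^ (q ^ k) = (\<Sum>i\<in>A. f i ^ (q ^ k))"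
  by (induction A rule: infinite_finite_induct) (simp_all add: power_qpow_add)

lemma power_qpow_power_qpow: "((x::'a) ^ (q ^ a)) ^ (q ^ b) = x ^ (q ^ (a + b))"
  by (simp add: power_mult[symmetric] power_add mult.commute)

lemma power_q_diff: "((x::'a) - y) ^ q = x ^ q - y ^ q"
  using power_q_add[of "x - y" y] by simp

lemma power_qpow_even: "(x::'a) ^ (q ^ (2 * t)) = x"
proof (induction t)
  case (Suc t)
  have "x ^ (q ^ (2 * Suc t)) = ((x ^ (q ^ (2 * t))) ^ q) ^ q"
    by (simp add: power_mult[symmetric] mult_ac)
  then show ?case using Suc.IH by (simp add: power_q_q)
qed simp

lemma power_qpow_odd:
  assumes "odd e" shows "(x::'a) ^ (q ^ e) = x ^ q"
proof -
  obtain t where "e = 2 * t + 1" using assms oddE by blast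
  then have "q ^ e = q ^ (2 * t) * q" by simp
  then have "x ^ (q ^ e) = (x ^ (q ^ (2 * t))) ^ q" by (simp only: power_mult)
  then show ?thesis by (simp add: power_qpow_even)
qed

lemma U_mult_assoc: "mul (mul a b) c = mul a (mul b c)"
proof
  fix k
  show "mul (mul a b) c k = mul a (mul b c) k"
  proof (cases "k \<le> N")
    case True
    have "mul (mul a b) c k = (\<Sum>i\<le>k. \<Sum>j\<le>i. a j * b (i-j) ^ (q^j) * c (k-i) ^ (q^i))"
      using True unfolding U_mult_def by (auto simp: sum_distrib_right intro!: sum.cong)
    also have "\<dots> = (\<Sum>j\<le>k. \<Sum>l\<le>k-j. a j * b ((j+l)-j) ^ (q^j) * c (k-(j+l)) ^ (q^(j+l)))"
      by (rule sum_triangle_swap)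
    also have "\<dots> = mul a (mul b c) k"
      using True unfolding U_mult_def
      by (auto simp: sum_distrib_left power_qpow_sum power_mult_distrib power_qpow_power_qpow
          add.commute mult.assoc intro!: sum.cong)
    finally show ?thesis .
  qed (simp add: U_mult_def)
qed

lemma U_mult_beyond: "k > N \<Longrightarrow> mul a b k = 0"
  by (simp add: U_mult_def)

lemma U_mult_closed: "a \<in> U_carrier h \<Longrightarrow> b \<in> U_carrier h \<Longrightarrow> mul a b \<in> U_carrier h"
  unfolding U_carrier_def U_mult_def by simp

lemma one_in_U: "U_one \<in> U_carrier h"
  by (simp add: U_carrier_def)

lemma U_mult_one_left: "a \<in> U_carrier h \<Longrightarrow> mul U_one a = a"
proof
  fix k assume "a \<in> U_carrier h"
  moreover have "(\<Sum>i\<le>k. (if i = 0 then 1 else 0) * a (k - i) ^ (q ^ i)) = a k"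
    by (subst sum.cong[OF refl, of _ _ "\<lambda>i. if i = 0 then a k else 0"]) auto
  ultimately show "mul U_one a k = a k" by (auto simp: U_mult_def U_carrier_def)
qed

lemma U_mult_one_right: "a \<in> U_carrier h \<Longrightarrow> mul a U_one = a"
proof
  fix k assume "a \<in> U_carrier h"
  moreover have "(\<Sum>i\<le>k. a i * (if k - i = 0 then 1 else 0) ^ (q ^ i)) = a k"
    by (subst sum.cong[OF refl, of _ _ "\<lambda>i. if i = k then a k else 0"]) auto
  ultimately show "mul a U_one k = a k"
    by (auto simp: U_mult_def U_carrier_def simp del: diff_is_0_eq diff_is_0_eq')
qed

lemma U_mult_split_top:
  assumes "k \<le> N" "a 0 = 1"
  shows "mul b a k = b k + (\<Sum>i<k. b i * a (k-i) ^ (q^i))"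
proof -
  have "{..k} = insert k {..<k}" by auto
  then show ?thesis using assms unfolding U_mult_def by simp
qed

lemma U_mult_right_cancel:
  assumes a: "a \<in> U_carrier h" and b: "b \<in> U_carrier h" and b': "b' \<in> U_carrier h"
    and eq: "mul b a = mul b' a"
  shows "b = b'"
proof
  fix k show "b k = b' k"
  proof (induction k rule: less_induct)
    case (less k)
    show ?case
    proof (cases "k \<le> N")
      case True
      have "(\<Sum>i<k. b i * a (k-i) ^ (q^i)) = (\<Sum>i<k. b' i * a (k-i) ^ (q^i))"
        using less by (intro sum.cong) auto
      then show ?thesis
        using eq U_mult_split_top[OF True, of a b] U_mult_split_top[OF True, of a b'] a
        by (simp add: U_carrier_def)
    qed (use b b' in \<open>simp add: U_carrier_def\<close>)
  qed
qed

lemma finite_U: "finite (U_carrier h :: (nat \<Rightarrow> 'a) set)"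
proof (rule finite_subset)
  let ?ext = "\<lambda>f i. if i \<le> N then f i else 0"
  show "U_carrier h \<subseteq> ?ext ` PiE {..N} (\<lambda>_. UNIV :: 'a set)"
  proof
    fix a :: "nat \<Rightarrow> 'a" assume "a \<in> U_carrier h"
    then have "a = ?ext (restrict a {..N})" by (auto simp: U_carrier_def)
    moreover have "restrict a {..N} \<in> PiE {..N} (\<lambda>_. UNIV)" by simp
    ultimately show "a \<in> ?ext ` PiE {..N} (\<lambda>_. UNIV)" by blast
  qed
qed (intro finite_imageI finite_PiE; simp)

definition U_group :: "(nat \<Rightarrow> 'a) monoid" where
  "U_group = \<lparr>carrier = U_carrier h, mult = mul, one = U_one\<rparr>"

lemma U_group_simps [simp]:
  "carrier U_group = U_carrier h" "mult U_group = mul" "monoid.one U_group = U_one"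
  by (simp_all add: U_group_def)

text \<open>Left inverses exist because right multiplication is injective on the finite set \<open>U\<close>.\<close>
lemma group_U_group: "group U_group"
proof (rule groupI)
  fix a assume "a \<in> carrier U_group"
  then have a: "a \<in> U_carrier h" by simp
  have "inj_on (\<lambda>b. mul b a) (U_carrier h)"
    by (rule inj_onI) (use U_mult_right_cancel a in blast)
  then have "(\<lambda>b. mul b a) ` U_carrier h = U_carrier h"
    by (intro card_subset_eq[OF finite_U]) (use U_mult_closed a card_image in auto)
  then have "U_one \<in> (\<lambda>b. mul b a) ` U_carrier h" using one_in_U by simp
  then obtain b where "b \<in> U_carrier h" "mul b a = U_one" by auto
  then show "\<exists>b\<in>carrier U_group. b \<otimes>\<^bsub>U_group\<^esub> a = \<one>\<^bsub>U_group\<^esub>" by auto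
qed (auto simp: U_mult_closed one_in_U U_mult_assoc U_mult_one_left)

sublocale U: group U_group
  by (rule group_U_group)

lemma U_inv_closed: "g \<in> U_carrier h \<Longrightarrow> inv\<^bsub>U_group\<^esub> g \<in> U_carrier h"
  using U.inv_closed by simp

lemma U_mult_inv_left: "g \<in> U_carrier h \<Longrightarrow> mul (inv\<^bsub>U_group\<^esub> g) g = U_one"
  using U.l_inv by simp

lemma U_mult_inv_right: "g \<in> U_carrier h \<Longrightarrow> mul g (inv\<^bsub>U_group\<^esub> g) = U_one"
  using U.r_inv by simp

lemma U_mult_inv_cancel_left:
  "g \<in> U_carrier h \<Longrightarrow> y \<in> U_carrier h \<Longrightarrow> mul (inv\<^bsub>U_group\<^esub> g) (mul g y) = y"
  by (simp add: U_mult_assoc[symmetric] U_mult_inv_left U_mult_one_left)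

lemma U_mult_inv_cancel_right:
  "g \<in> U_carrier h \<Longrightarrow> y \<in> U_carrier h \<Longrightarrow> mul g (mul (inv\<^bsub>U_group\<^esub> g) y) = y"
  by (simp add: U_mult_assoc[symmetric] U_mult_inv_right U_mult_one_left)

lemma odd_vanishing_mult:
  assumes a: "\<forall>i. odd i \<and> i < J \<longrightarrow> a i = 0" and b: "\<forall>i. odd i \<and> i < J \<longrightarrow> b i = (0::'a)"
    and k: "odd k" "k < J"
  shows "mul a b k = 0"
proof -
  have "a i * b (k - i) ^ (q ^ i) = 0" if "i \<le> k" for i
    using that a b k by (cases "odd i") auto
  then have "(\<Sum>i\<le>k. a i * b (k - i) ^ (q ^ i)) = 0" by (intro sum.neutral) auto
  then show ?thesis by (simp add: U_mult_def)
qed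

lemma U_mult_first_odd_coeff:
  assumes k: "odd k" "k \<le> N" and a0: "a 0 = 1" and b0: "b 0 = 1"
    and a: "\<forall>i. odd i \<and> i < k \<longrightarrow> a i = 0" and b: "\<forall>i. odd i \<and> i < k \<longrightarrow> b i = (0::'a)"
  shows "mul a b k = a k + b k"
proof -
  have "a i * b (k - i) ^ (q ^ i) = (if i = 0 then b k else 0) + (if i = k then a k else 0)"
    if "i \<le> k" for i
  proof (cases "i = 0 \<or> i = k")
    case True
    then show ?thesis using a0 b0 odd_pos[OF k(1)] by auto
  next
    case False
    then have "0 < i" "i < k" using that by auto
    then have "a i = 0 \<or> b (k - i) = 0" using a b k(1) by (cases "odd i") auto
    then show ?thesis using False by auto
  qed
  then have "mul a b k = (\<Sum>i\<le>k. (if i = 0 then b k else 0) + (if i = k then a k else 0))"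
    using k by (simp add: U_mult_def)
  then show ?thesis by (simp add: sum.distrib)
qed

lemma H'_subset_U: "H' q h \<subseteq> U_carrier h"
  by (auto simp: H'_def)

lemma H0'_subset_H': "H0' h \<subseteq> (H' q h :: (nat \<Rightarrow> 'a) set)"
proof
  fix a :: "nat \<Rightarrow> 'a" assume a: "a \<in> H0' h"
  have "a i = 0" if "odd i" "i \<le> h - 1" for i
  proof (rule ccontr)
    assume "a i \<noteq> 0"
    then have "i = N \<or> (odd i \<and> i > h - 1)"
      using a that odd_pos[of i] by (auto simp: H0'_def)
    then show False using that h_ge_2 by auto
  qed
  moreover have "odd (h - 1)" if "even h" using that h_ge_2 by simp
  ultimately show "a \<in> H' q h" using a by (auto simp: H'_def H0'_def)
qed

lemma one_in_H': "U_one \<in> H' q h"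
  using one_in_U by (auto simp: H'_def)

lemma H'_mult_closed:
  assumes a: "a \<in> H' q h" and b: "b \<in> H' q h"
  shows "mul a b \<in> H' q h"
proof (cases "odd h")
  case True
  then have "\<forall>i. odd i \<and> i < h \<longrightarrow> a i = 0" "\<forall>i. odd i \<and> i < h \<longrightarrow> b i = 0"
    using a b by (auto simp: H'_def)
  then have "mul a b k = 0" if "odd k" "k \<le> h - 1" for k
    using that h_ge_2 by (intro odd_vanishing_mult[of h]) auto
  then show ?thesis using True a b U_mult_closed H'_subset_U by (auto simp: H'_def)
next
  case False
  have av: "\<forall>i. odd i \<and> i < h - 1 \<longrightarrow> a i = 0" and bv: "\<forall>i. odd i \<and> i < h - 1 \<longrightarrow> b i = 0"
    and aq: "a (h - 1) ^ q = a (h - 1)" and bq: "b (h - 1) ^ q = b (h - 1)"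
    using a b False by (auto simp: H'_def)
  have "mul a b (h - 1) = a (h - 1) + b (h - 1)"
    using False h_ge_2 a b av bv by (intro U_mult_first_odd_coeff) (auto simp: H'_def U_carrier_def)
  then have "mul a b (h - 1) ^ q = mul a b (h - 1)" using aq bq power_q_add by simp
  then show ?thesis
    using False odd_vanishing_mult[OF av bv] a b U_mult_closed H'_subset_U by (auto simp: H'_def)
qed

lemma subgroup_H': "subgroup (H' q h) U_group"
  by (rule group.finite_mult_closed_subgroup[OF group_U_group])
     (use finite_U H'_subset_U one_in_H' H'_mult_closed finite_subset in auto)

definition odd_free :: "nat \<Rightarrow> (nat \<Rightarrow> 'a) set" where
  "odd_free j = {u \<in> U_carrier h. \<forall>i. odd i \<and> i < j \<longrightarrow> u i = 0}"

lemma subgroup_odd_free: "subgroup (odd_free j) U_group"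
proof (rule group.finite_mult_closed_subgroup[OF group_U_group])
  show "finite (odd_free j)"
    using finite_U by (rule finite_subset[rotated]) (auto simp: odd_free_def)
  show "odd_free j \<subseteq> carrier U_group" by (auto simp: odd_free_def)
  have "U_one \<in> odd_free j" using one_in_U by (simp add: odd_free_def)
  then show "odd_free j \<noteq> {}" by blast
  fix a b assume "a \<in> odd_free j" "b \<in> odd_free j"
  then show "a \<otimes>\<^bsub>U_group\<^esub> b \<in> odd_free j"
    using odd_vanishing_mult[of j a b] U_mult_closed by (auto simp: odd_free_def)
qed

section \<open>Commutators with \<open>1 + a\<tau>\<^sup>m\<close>\<close>

definition top_or_odd_above :: "nat \<Rightarrow> (nat \<Rightarrow> 'a) \<Rightarrow> bool" where
  "top_or_odd_above m v \<longleftrightarrow> (\<forall>k. v k \<noteq> 0 \<longrightarrow> k = N \<or> (odd k \<and> m < k \<and> k < N))"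

lemma top_or_odd_above_term:
  assumes mj: "m + j = N" and v: "top_or_odd_above m v" and u: "u \<in> odd_free j"
    and ik: "i \<le> k" "k \<le> N" "i \<noteq> N" and nz: "v i * u (k - i) ^ (q ^ i) \<noteq> 0"
  shows "odd k \<and> m < k \<and> k < N"
proof -
  have "v i \<noteq> 0" "u (k - i) \<noteq> 0" using nz by auto
  then have i: "odd i" "m < i" and "\<not> (odd (k - i) \<and> k - i < j)"
    using v u ik by (auto simp: top_or_odd_above_def odd_free_def)
  then have "odd k" using ik mj by auto
  moreover have "k \<noteq> N" using calculation by auto
  ultimately show ?thesis using i ik by auto
qed

lemma top_or_odd_above_mult:
  assumes mj: "m + j = N" and v: "top_or_odd_above m v" and u: "u \<in> odd_free j"
  shows "top_or_odd_above m (mul v u)" and "mul v u N = v N"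
proof -
  have u0: "u 0 = 1" using u by (simp add: odd_free_def U_carrier_def)
  have "(\<Sum>i\<le>N. v i * u (N - i) ^ (q ^ i)) = (\<Sum>i\<le>N. if i = N then v N else 0)"
    using top_or_odd_above_term[OF mj v u, of _ N] u0 by (intro sum.cong) auto
  then show "mul v u N = v N" by (simp add: U_mult_def)
  show "top_or_odd_above m (mul v u)"
    unfolding top_or_odd_above_def
  proof (intro allI impI)
    fix k assume nz: "mul v u k \<noteq> 0"
    then have kN: "k \<le> N" using U_mult_beyond not_le by metis
    then have "(\<Sum>i\<le>k. v i * u (k - i) ^ (q ^ i)) \<noteq> 0" using nz by (simp add: U_mult_def)
    then obtain i where i: "i \<le> k" "v i * u (k - i) ^ (q ^ i) \<noteq> 0"
      by (meson atMost_iff sum.neutral)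
    show "k = N \<or> (odd k \<and> m < k \<and> k < N)"
      using top_or_odd_above_term[OF mj v u i(1) kN _ i(2)] i(1) kN by (cases "i = N") auto
  qed
qed

definition one_plus_monomial :: "nat \<Rightarrow> 'a \<Rightarrow> nat \<Rightarrow> 'a" where
  "one_plus_monomial m a = (\<lambda>k. if k = 0 then 1 else if k = m then a else 0)"

lemma U_mult_one_plus_monomial_right:
  assumes "g 0 = 1" "0 < m" "k \<le> N"
  shows "mul g (one_plus_monomial m a) k
    = g k + (if m \<le> k then g (k - m) * a ^ (q ^ (k - m)) else 0)"
proof -
  have "(\<Sum>i\<le>k. g i * one_plus_monomial m a (k - i) ^ (q ^ i))
      = (\<Sum>i\<le>k. (if i = k then g k else 0)
          + (if m \<le> k \<and> i = k - m then g (k - m) * a ^ (q ^ (k - m)) else 0))"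
    using assms by (intro sum.cong) (auto simp: one_plus_monomial_def)
  then show ?thesis using assms by (simp add: U_mult_def sum.distrib)
qed

lemma U_mult_one_plus_monomial_left:
  assumes "g 0 = 1" "0 < m" "k \<le> N"
  shows "mul (one_plus_monomial m a) g k = g k + (if m \<le> k then a * g (k - m) ^ (q ^ m) else 0)"
proof -
  have "(\<Sum>i\<le>k. one_plus_monomial m a i * g (k - i) ^ (q ^ i))
      = (\<Sum>i\<le>k. (if i = 0 then g k else 0)
          + (if m \<le> k \<and> i = m then a * g (k - m) ^ (q ^ m) else 0))"
    using assms by (intro sum.cong) (auto simp: one_plus_monomial_def)
  then show ?thesis using assms by (simp add: U_mult_def sum.distrib)
qed

text \<open>The top coefficient is \<open>g\<^sub>j a\<^sup>q - a g\<^sub>j\<^sup>q\<close> because \<open>x ^ q ^ e = x ^ q\<close> for odd \<open>e\<close> on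
  the field with \<open>q\<^sup>2\<close> elements, and \<open>j\<close> and \<open>m\<close> are odd.\<close>
lemma commutator_difference:
  assumes g: "g \<in> odd_free j" and j: "odd j" and mj: "m + j = N" and jm: "j \<le> m"
    and x: "x = one_plus_monomial m a"
  defines "D \<equiv> \<lambda>k. mul g x k - mul x g k"
  shows "top_or_odd_above m D" and "D N = g j * a ^ q - a * g j ^ q"
proof -
  have g0: "g 0 = 1" and gv: "\<And>i. odd i \<Longrightarrow> i < j \<Longrightarrow> g i = 0"
    using g by (auto simp: odd_free_def U_carrier_def)
  have "odd m" using j mj by (metis even_add even_mult_iff even_numeral)
  then have m: "odd m" "0 < m" by (auto simp: odd_pos)
  have Dk: "D k = (if k \<le> N \<and> m \<le> k
      then g (k - m) * a ^ (q ^ (k - m)) - a * g (k - m) ^ (q ^ m) else 0)" for k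
    by (cases "k \<le> N")
       (simp_all add: D_def x g0 m U_mult_beyond
         U_mult_one_plus_monomial_right U_mult_one_plus_monomial_left)
  have "N - m = j" using mj by simp
  then show "D N = g j * a ^ q - a * g j ^ q"
    using Dk[of N] mj by (simp add: power_qpow_odd j m(1))
  show "top_or_odd_above m D"
    unfolding top_or_odd_above_def
  proof (intro allI impI)
    fix k assume nz: "D k \<noteq> 0"
    then have k: "k \<le> N" "m \<le> k"
      and nz': "g (k - m) * a ^ (q ^ (k - m)) - a * g (k - m) ^ (q ^ m) \<noteq> 0"
      using Dk[of k] by (auto split: if_splits)
    have "k \<noteq> m" using nz' g0 by auto
    moreover have "k = N" if "odd (k - m)"
      using gv[OF that] nz' k mj by (cases "k - m < j") auto
    ultimately show "k = N \<or> (odd k \<and> m < k \<and> k < N)"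
      using k m(1) by (cases "odd (k - m)") auto
  qed
qed

lemma U_mult_add_left: "mul (\<lambda>k. u k + v k) c = (\<lambda>k. mul u c k + mul v c k)"
  by (auto simp: U_mult_def sum.distrib distrib_right)

text \<open>This uses that the multiplication is additive in the left factor.\<close>
lemma commutator_eq_one_plus:
  assumes g: "g \<in> U_carrier h" and x: "x \<in> U_carrier h"
  shows "mul (mul (mul g x) (inv\<^bsub>U_group\<^esub> g)) (inv\<^bsub>U_group\<^esub> x)
    = (\<lambda>k. U_one k + mul (mul (\<lambda>k. mul g x k - mul x g k) (inv\<^bsub>U_group\<^esub> g)) (inv\<^bsub>U_group\<^esub> x) k)"
proof -
  let ?gi = "inv\<^bsub>U_group\<^esub> g" and ?xi = "inv\<^bsub>U_group\<^esub> x"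
  let ?D = "\<lambda>k. mul g x k - mul x g k"
  have "mul (mul (mul g x) ?gi) ?xi = mul (mul (\<lambda>k. mul x g k + ?D k) ?gi) ?xi" by simp
  also have "\<dots> = (\<lambda>k. mul (mul (mul x g) ?gi) ?xi k + mul (mul ?D ?gi) ?xi k)"
    by (simp only: U_mult_add_left)
  also have "mul (mul (mul x g) ?gi) ?xi = U_one"
    using g x by (simp add: U_mult_assoc U_inv_closed U_mult_inv_cancel_right U_mult_inv_right
        U_mult_one_left)
  finally show ?thesis .
qed

lemma one_plus_in_H0':
  assumes E: "top_or_odd_above m E" and m: "h - 1 \<le> m"
  shows "(\<lambda>k. U_one k + E k) \<in> H0' h"
proof -
  have "E 0 = 0" "\<forall>k > N. E k = 0" using E h_ge_2 by (auto simp: top_or_odd_above_def)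
  then show ?thesis using E m by (auto simp: H0'_def U_carrier_def top_or_odd_above_def)
qed

lemma conjugate_one_plus_monomial:
  fixes \<nu> :: "(nat \<Rightarrow> 'a) \<Rightarrow> 'k::field" and \<psi> :: "'a \<Rightarrow> 'k"
  assumes g: "g \<in> odd_free j" and j: "odd j" "j \<le> h - 1"
    and x: "x = one_plus_monomial (N - j) a" "x \<in> H' q h"
    and \<nu>: "is_character_on mul (H' q h) \<nu>" and \<nu>0: "\<forall>z\<in>H0' h. \<nu> z = \<psi> (z N)"
  shows "\<exists>y\<in>H' q h. mul g x = mul y g \<and> \<nu> y = \<psi> (g j * a ^ q - a * g j ^ q) * \<nu> x"
proof -
  define m where "m = N - j"
  have mj: "m + j = N" and jm: "j \<le> m" and mh: "h - 1 \<le> m" using j h_ge_2 by (auto simp: m_def)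
  have gU: "g \<in> U_carrier h" using g by (simp add: odd_free_def)
  have xU: "x \<in> U_carrier h" using x H'_subset_U by auto
  have "x \<in> odd_free j" using xU jm by (auto simp: odd_free_def x(1) m_def one_plus_monomial_def)
  then have inv_odd_free: "inv\<^bsub>U_group\<^esub> g \<in> odd_free j" "inv\<^bsub>U_group\<^esub> x \<in> odd_free j"
    using g subgroup.m_inv_closed[OF subgroup_odd_free] by auto
  define D where "D = (\<lambda>k. mul g x k - mul x g k)"
  define E where "E = mul (mul D (inv\<^bsub>U_group\<^esub> g)) (inv\<^bsub>U_group\<^esub> x)"
  have "top_or_odd_above m D" "D N = g j * a ^ q - a * g j ^ q"
    using commutator_difference[OF g j(1) mj jm x(1)[folded m_def]] by (simp_all add: D_def)
  then have E: "top_or_odd_above m E" "E N = g j * a ^ q - a * g j ^ q"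
    using top_or_odd_above_mult[OF mj] inv_odd_free by (simp_all add: E_def)
  define w where "w = mul (mul (mul g x) (inv\<^bsub>U_group\<^esub> g)) (inv\<^bsub>U_group\<^esub> x)"
  have w: "w = (\<lambda>k. U_one k + E k)"
    using commutator_eq_one_plus[OF gU xU] by (simp add: w_def E_def D_def)
  then have wH0: "w \<in> H0' h" using one_plus_in_H0'[OF E(1) mh] by simp
  then have "\<nu> w = \<psi> (g j * a ^ q - a * g j ^ q)"
    using \<nu>0 E(2) h_ge_2 by (simp add: w)
  moreover have "mul w x \<in> H' q h" using wH0 H0'_subset_H' x(2) H'_mult_closed by auto
  moreover have "\<nu> (mul w x) = \<nu> w * \<nu> x"
    using \<nu> wH0 H0'_subset_H' x(2) by (auto simp: is_character_on_def)
  moreover have "mul (mul w x) g = mul g x"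
    using gU xU
    by (simp add: w_def U_mult_assoc U_inv_closed U_mult_inv_cancel_left U_mult_inv_left
        U_mult_one_right)
  ultimately show ?thesis by (metis (no_types, lifting))
qed

lemma least_odd_nonzero_coeff:
  assumes g: "g \<in> U_carrier h" "g \<notin> H' q h"
  obtains j where "odd j" "j \<le> h - 1" "g j \<noteq> 0" "g \<in> odd_free j" "j = h - 1 \<Longrightarrow> g j ^ q \<noteq> g j"
proof -
  let ?P = "\<lambda>i. odd i \<and> i \<le> h - 1 \<and> g i \<noteq> 0"
  have "\<exists>i. ?P i"
  proof (rule ccontr)
    assume "\<not> (\<exists>i. ?P i)"
    then have z: "\<And>i. odd i \<Longrightarrow> i \<le> h - 1 \<Longrightarrow> g i = 0" by auto
    moreover have "odd (h - 1)" if "even h" using that h_ge_2 by simp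
    ultimately have "g \<in> H' q h" using g(1) by (auto simp: H'_def)
    then show False using g(2) by simp
  qed
  define j where "j = (LEAST i. ?P i)"
  have j: "?P j" unfolding j_def using \<open>\<exists>i. ?P i\<close> by (rule LeastI_ex)
  have "g \<in> odd_free j"
    using g(1) j not_less_Least[of _ ?P] by (auto simp: odd_free_def j_def)
  moreover have "g j ^ q \<noteq> g j" if "j = h - 1"
  proof
    assume "g j ^ q = g j"
    moreover have "even h" using j that h_ge_2 by auto
    ultimately have "g \<in> H' q h" using \<open>g \<in> odd_free j\<close> that by (auto simp: H'_def odd_free_def)
    then show False using g(2) by simp
  qed
  ultimately show thesis using that j by blast
qed

lemma one_plus_monomial_in_H':
  assumes "h - 1 < m \<and> m \<le> N \<or> m = h - 1 \<and> even h \<and> a ^ q = a"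
  shows "one_plus_monomial m a \<in> H' q h"
  using assms h_ge_2 by (auto simp: H'_def U_carrier_def one_plus_monomial_def)

lemma twisted_form_solution:
  assumes "(b::'a) \<noteq> 0"
  shows "b * (c / b ^ q) ^ q - c / b ^ q * b ^ q = c ^ q - c"
  using assms by (simp add: power_divide power_q_q)

lemma twisted_form_solution_fixed:
  assumes b: "(b::'a) ^ q \<noteq> b" and a_def: "a = (c ^ q - c) / (b - b ^ q)"
  shows "a ^ q = a" and "b * a ^ q - a * b ^ q = c ^ q - c"
proof -
  have "(c ^ q - c) ^ q = - (c ^ q - c)" "(b - b ^ q) ^ q = - (b - b ^ q)"
    by (simp_all add: power_q_diff power_q_q)
  moreover have "(c - c ^ q) / (b ^ q - b) = (c ^ q - c) / (b - b ^ q)"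
    by (metis minus_diff_eq minus_divide_divide)
  ultimately show "a ^ q = a" by (simp add: a_def power_divide)
  then have "b * a ^ q - a * b ^ q = a * (b - b ^ q)" by (simp add: algebra_simps)
  also have "\<dots> = c ^ q - c" using b by (simp add: a_def)
  finally show "b * a ^ q - a * b ^ q = c ^ q - c" .
qed

lemma mackey_separated_H':
  fixes \<nu> :: "(nat \<Rightarrow> 'a) \<Rightarrow> 'k::field" and \<psi> :: "'a \<Rightarrow> 'k"
  assumes \<psi>: "additive_character \<psi>" "has_conductor_q2 q \<psi>"
    and \<nu>: "is_character_on mul (H' q h) \<nu>" and \<nu>0: "\<forall>z\<in>H0' h. \<nu> z = \<psi> (z N)"
    and g: "g \<in> U_carrier h" "g \<notin> H' q h"
  shows "\<exists>x\<in>H' q h. \<exists>y\<in>H' q h. mul g x = mul y g \<and> \<nu> x \<noteq> \<nu> y"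
proof -
  obtain c where "\<psi> (c ^ q) \<noteq> \<psi> c" using \<psi>(2) by (auto simp: has_conductor_q2_def)
  moreover have "\<psi> (c ^ q) = \<psi> (c ^ q - c) * \<psi> c"
    using \<psi>(1) unfolding additive_character_def by (metis diff_add_cancel)
  ultimately have c: "\<psi> (c ^ q - c) \<noteq> 1" by auto
  obtain j where j: "odd j" "j \<le> h - 1" "g j \<noteq> 0" "g \<in> odd_free j" "j = h - 1 \<Longrightarrow> g j ^ q \<noteq> g j"
    using least_odd_nonzero_coeff[OF g] by blast
  obtain a where x: "one_plus_monomial (N - j) a \<in> H' q h"
    and a: "g j * a ^ q - a * g j ^ q = c ^ q - c"
  proof (cases "j = h - 1")
    case True
    define a where "a = (c ^ q - c) / (g j - g j ^ q)"
    have "even h" "N - j = h - 1" using True j(1) h_ge_2 by auto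
    then show thesis
      using that[of a] twisted_form_solution_fixed[OF j(5)[OF True] a_def] one_plus_monomial_in_H'
      by simp
  next
    case False
    then have "h - 1 < N - j \<and> N - j \<le> N" using j(2) by auto
    then show thesis
      using that[OF one_plus_monomial_in_H' twisted_form_solution[OF j(3)]] by simp
  qed
  obtain y where "y \<in> H' q h" "mul g (one_plus_monomial (N - j) a) = mul y g"
    "\<nu> y = \<psi> (c ^ q - c) * \<nu> (one_plus_monomial (N - j) a)"
    using conjugate_one_plus_monomial[OF j(4,1,2) refl x \<nu> \<nu>0] a by auto
  moreover have "\<nu> (one_plus_monomial (N - j) a) \<noteq> 0"
    using \<nu> x by (simp add: is_character_on_def)
  ultimately show ?thesis using x c by (metis mult_cancel_right2)
qed

end

lemma unipotent_U_over_finite_field: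
  fixes p n q :: nat
  assumes p: "prime p" and q: "q = p ^ n" and card: "card (UNIV :: 'a::{field,finite} set) = q ^ 2"
    and h: "h \<ge> 2"
  shows "unipotent_U TYPE('a) q h"
proof
  have "CHAR('a) > 0" by (rule finite_imp_CHAR_pos) simp
  then have "prime CHAR('a)" by (rule prime_CHAR_semidom)
  moreover have "CHAR('a) dvd p ^ (2 * n)"
    using CHAR_dvd_CARD[where ?'a = 'a] card q by (simp add: power_mult[symmetric] mult.commute)
  ultimately have "CHAR('a) = p" using p prime_dvd_power primes_dvd_imp_eq by blast
  then show "(x + y) ^ q = x ^ q + y ^ q" for x y :: 'a
    using freshmans_dream' \<open>prime CHAR('a)\<close> q by blast
  show "(x ^ q) ^ q = x" for x :: 'a
    using finite_field_power_card[of x] card by (simp add: power_mult[symmetric] power2_eq_square)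
  show "q > 0" using p q prime_gt_0_nat by simp
qed (rule h)

theorem corollary2p4:
  fixes p q n h :: nat
    and \<psi> :: "'a::{field,finite} \<Rightarrow> 'k::field_char_0"
    and \<nu> :: "(nat \<Rightarrow> 'a) \<Rightarrow> 'k"
  assumes "prime p" and "n \<ge> 1" and "q = p ^ n" and "card (UNIV :: 'a set) = q ^ 2"
    and "h \<ge> 2"
    and "algebraically_closed TYPE('k)"
    and "additive_character \<psi>" and "has_conductor_q2 q \<psi>"
    and "is_character_on (U_mult q h) (H' q h) \<nu>"
    and "\<forall>x\<in>H0' h. \<nu> x = \<psi> (x (2*(h-1)))"
  shows "induced_irreducible (U_mult q h) (U_carrier h) (H' q h) \<nu>"
proof -
  interpret unipotent_U q h "TYPE('a)"
    using unipotent_U_over_finite_field assms(1,3,4,5) by blast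
  interpret induced_from_character U_group "H' q h" \<nu>
    by (intro induced_from_character.intro induced_from_character_axioms.intro group_U_group
        subgroup_H') (use finite_U assms(9) in simp_all)
  have "induced_irreducible (mult U_group) (carrier U_group) (H' q h) \<nu>"
    using mackey_irreducible mackey_separated_H'[OF assms(7,8,9,10)]
    unfolding mackey_separated_def by simp
  then show ?thesis by simp
qed

end
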